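(* Let $X$ be a quasi-Banach function space over $\mathbf{R}^d$ with the Fatou property. If $M:X\to X$ is bounded, then $M:X''\to X''$ is bounded with $\|M\|_{X''\to X''}\le\|M\|_{X\to X}$.
   Context: A quasi-Banach function space over $\mathbf{R}^d$ is a complete quasi-normed space $X\subseteq L^0(\mathbf{R}^d)$ with the ideal property (if $f\in X$, $|g|\le|f|$ then $g\in X$, $\|g\|_X\le\|f\|_X$) and the saturation property (every set of positive measure contains a subset $F$ of positive measure with $\mathbf{1}_F\in X$). Köthe dual: $X'=\{g:fg\in L^1\ \forall f\in X\}$ with $\|g\|_{X'}=\sup_{\|f\|_X=1}\int|fg|$; $X''=(X')'$. Fatou property: $0\le f_n\uparrow f$ a.e., $\sup\|f_n\|_X<\infty$ imply $f\in X$, $\|f\|_X=\sup\|f_n\|_X$. $M$ is the Hardy–Littlewood maximal operator over axis-parallel cubes. *)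

theory Defs
  imports "HOL-Analysis.Analysis"
begin

text \<open>Functions on R^d are modelled as real-valued functions on a Euclidean space 'a
 (dimension DIM('a)); L^0 = Lebesgue measurable functions, identified a.e. through
 the (a.e.) ideal property.\<close>

definition qbfs :: "('a::euclidean_space \<Rightarrow> real) set \<Rightarrow> (('a \<Rightarrow> real) \<Rightarrow> real) \<Rightarrow> bool" where
  "qbfs X nX \<longleftrightarrow>
     X \<subseteq> borel_measurable lebesgue \<and>
     (\<lambda>x. 0) \<in> X \<and>
     (\<forall>f\<in>X. \<forall>g\<in>X. (\<lambda>x. f x + g x) \<in> X) \<and>
     (\<forall>f\<in>X. \<forall>c. (\<lambda>x. c * f x) \<in> X) \<and>
     (\<forall>f\<in>X. 0 \<le> nX f) \<and>
     (\<forall>f\<in>X. nX f = 0 \<longleftrightarrow> (AE x in lebesgue. f x = 0)) \<and>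
     (\<forall>f\<in>X. \<forall>c. nX (\<lambda>x. c * f x) = \<bar>c\<bar> * nX f) \<and>
     (\<exists>K\<ge>1. \<forall>f\<in>X. \<forall>g\<in>X. nX (\<lambda>x. f x + g x) \<le> K * (nX f + nX g)) \<and>
     (\<forall>u. (\<forall>k. u k \<in> X) \<longrightarrow>
          (\<forall>e>0. \<exists>N. \<forall>m\<ge>N. \<forall>k\<ge>N. nX (\<lambda>x. u m x - u k x) < e) \<longrightarrow>
          (\<exists>f\<in>X. (\<lambda>k. nX (\<lambda>x. u k x - f x)) \<longlonglongrightarrow> 0)) \<and>
     (\<forall>f\<in>X. \<forall>g\<in>borel_measurable lebesgue.
          (AE x in lebesgue. \<bar>g x\<bar> \<le> \<bar>f x\<bar>) \<longrightarrow> g \<in> X \<and> nX g \<le> nX f) \<and>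
     (\<forall>E\<in>sets lebesgue. emeasure lebesgue E > 0 \<longrightarrow>
          (\<exists>F\<in>sets lebesgue. F \<subseteq> E \<and> emeasure lebesgue F > 0 \<and> indicator F \<in> X))"

definition fatou_property :: "('a::euclidean_space \<Rightarrow> real) set \<Rightarrow> (('a \<Rightarrow> real) \<Rightarrow> real) \<Rightarrow> bool" where
  "fatou_property X nX \<longleftrightarrow>
     (\<forall>u f. (\<forall>k. u k \<in> X) \<longrightarrow> f \<in> borel_measurable lebesgue \<longrightarrow>
        (AE x in lebesgue. (\<forall>k. 0 \<le> u k x \<and> u k x \<le> u (Suc k) x) \<and> (\<lambda>k. u k x) \<longlonglongrightarrow> f x) \<longrightarrow>
        bdd_above (range (\<lambda>k. nX (u k))) \<longrightarrow>
        f \<in> X \<and> nX f = (SUP k. nX (u k)))"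

definition kothe :: "('a::euclidean_space \<Rightarrow> real) set \<Rightarrow> ('a \<Rightarrow> real) set" where
  "kothe X = {g \<in> borel_measurable lebesgue. \<forall>f\<in>X. integrable lebesgue (\<lambda>x. f x * g x)}"

definition kothe_norm :: "('a::euclidean_space \<Rightarrow> real) set \<Rightarrow> (('a \<Rightarrow> real) \<Rightarrow> 'b::one) \<Rightarrow> ('a \<Rightarrow> real) \<Rightarrow> ennreal" where
  "kothe_norm X nX g = (SUP f\<in>{f\<in>X. nX f = 1}. \<integral>\<^sup>+ x. ennreal \<bar>f x * g x\<bar> \<partial>lebesgue)"

definition cubes :: "'a::euclidean_space set set" where
  "cubes = {box a b | a b. \<exists>l>0. \<forall>i\<in>Basis. (b - a) \<bullet> i = l}"

definition maximal :: "('a::euclidean_space \<Rightarrow> real) \<Rightarrow> 'a \<Rightarrow> ennreal" where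
  "maximal f x = (SUP Q\<in>{Q\<in>cubes. x \<in> Q}.
      (\<integral>\<^sup>+ y\<in>Q. ennreal \<bar>f y\<bar> \<partial>lebesgue) / emeasure lebesgue Q)"

definition maximal_in :: "('a::euclidean_space \<Rightarrow> real) set \<Rightarrow> ('a \<Rightarrow> real) \<Rightarrow> bool" where
  "maximal_in S f \<longleftrightarrow> (AE x in lebesgue. maximal f x \<noteq> \<infinity>) \<and> (\<lambda>x. enn2real (maximal f x)) \<in> S"

end

theory Submission
  imports Defs
begin

text \<open>Over a countable family of cubes, \<open>M h\<close> is the increasing limit of finite maxima, and a
  finite maximum over cubes \<open>Q\<^sub>i\<close> is the linear expression \<open>\<Sum>\<^sub>i 1(E\<^sub>i) avg(h, Q\<^sub>i)\<close> for suitable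
  disjoint \<open>E\<^sub>i \<subseteq> Q\<^sub>i\<close>. Tested against \<open>\<bar>g\<bar>\<close> with \<open>g \<in> X'\<close>, this linear operator has the adjoint
  \<open>G = \<Sum>\<^sub>i (\<integral>\<^sub>E\<^sub>i \<bar>g\<bar> / \<bar>Q\<^sub>i\<bar>) 1(Q\<^sub>i)\<close>, and testing \<open>G\<close> against \<open>f \<in> X\<close> is dominated by
  testing \<open>M f\<close> against \<open>\<bar>g\<bar>\<close>. Hence \<open>G\<close> has norm at most \<open>C \<parallel>g\<parallel>\<close> in \<open>X'\<close>, and Hoelder's
  inequality between \<open>X'\<close> and \<open>X''\<close> gives \<open>\<integral> M h \<bar>g\<bar> \<le> C \<parallel>h\<parallel>\<^sub>X\<^sub>'\<^sub>' \<parallel>g\<parallel>\<^sub>X\<^sub>'\<close>.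
  All norms involved are finite: on \<open>X''\<close> because the norm of \<open>X'\<close> is countably subadditive,
  on \<open>X'\<close> because the Fatou property makes \<open>X\<close> closed under geometrically weighted series of
  normalised functions.\<close>

section \<open>Averages over cubes and the maximal function\<close>

definition average :: "('a::euclidean_space \<Rightarrow> real) \<Rightarrow> 'a set \<Rightarrow> ennreal" where
  "average h Q = (\<integral>\<^sup>+y\<in>Q. ennreal \<bar>h y\<bar> \<partial>lebesgue) / emeasure lebesgue Q"

lemma maximal_eq_SUP_average: "maximal h x = (SUP Q\<in>{Q\<in>cubes. x \<in> Q}. average h Q)"
  by (simp add: maximal_def average_def)

lemma open_cube: "Q \<in> cubes \<Longrightarrow> open Q"
  unfolding cubes_def by auto

lemma cube_in_sets_lebesgue: "Q \<in> cubes \<Longrightarrow> Q \<in> sets lebesgue"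
  unfolding cubes_def by auto

lemma average_le_maximal: "Q \<in> cubes \<Longrightarrow> x \<in> Q \<Longrightarrow> average h Q \<le> maximal h x"
  unfolding maximal_eq_SUP_average by (rule SUP_upper) auto

lemma box_in_cubes: "l > 0 \<Longrightarrow> box a (a + l *\<^sub>R One) \<in> cubes"
  unfolding cubes_def
  by (intro CollectI exI[of _ a] exI[of _ "a + l *\<^sub>R One"] conjI exI[of _ l]) (auto simp: inner_simps)

lemma centred_box_in_cubes: "r > 0 \<Longrightarrow> box (- r *\<^sub>R One) (r *\<^sub>R One) \<in> cubes"
proof -
  assume "r > 0"
  have "- r *\<^sub>R One + (2 * r) *\<^sub>R One = (r *\<^sub>R One :: 'a)"
    using scaleR_left_distrib[of "- r" "2 * r" "One :: 'a"] by simp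
  moreover have "box (- r *\<^sub>R One) (- r *\<^sub>R One + (2 * r) *\<^sub>R One) \<in> (cubes :: 'a set set)"
    by (rule box_in_cubes) (use \<open>r > 0\<close> in simp)
  ultimately show ?thesis
    by (simp only:)
qed

lemma mem_centred_box: "norm x < r \<Longrightarrow> x \<in> box (- r *\<^sub>R One) (r *\<^sub>R One)"
  using Basis_le_norm[of _ x] by (fastforce simp: mem_box inner_simps abs_less_iff)

lemma emeasure_cube:
  assumes "Q \<in> cubes"
  shows "0 < emeasure lebesgue Q" "emeasure lebesgue Q < \<infinity>"
proof -
  obtain a b l where Q: "Q = box a b" "l > 0" "\<And>i. i \<in> Basis \<Longrightarrow> (b - a) \<bullet> i = l"
    using assms unfolding cubes_def by blast
  then have "a \<bullet> i \<le> b \<bullet> i" if "i \<in> Basis" for i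
    using that by (fastforce simp: inner_diff_left)
  then have "emeasure lebesgue Q = ennreal (\<Prod>i\<in>Basis. (b - a) \<bullet> i)"
    unfolding Q(1) by simp
  also have "\<dots> = ennreal (l ^ DIM('a))"
    using Q(3) by simp
  finally show "0 < emeasure lebesgue Q" "emeasure lebesgue Q < \<infinity>"
    using Q(2) by simp_all
qed

text \<open>By Lindelof's theorem, countably many cubes cover each rational superlevel set of the
  averages.\<close>
lemma countable_cubes_exhaust_levels:
  obtains CC :: "'a::euclidean_space set set" where "countable CC" "CC \<noteq> {}" "CC \<subseteq> cubes"
    "\<And>t x Q. Q \<in> cubes \<Longrightarrow> x \<in> Q \<Longrightarrow> ennreal (real_of_rat t) < average h Q \<Longrightarrow>
       \<exists>Q'\<in>CC. x \<in> Q' \<and> ennreal (real_of_rat t) < average h Q'"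
proof -
  define F where "F t = {Q\<in>cubes. ennreal (real_of_rat t) < average h Q}" for t
  have "\<exists>F'. F' \<subseteq> F t \<and> countable F' \<and> \<Union>F' = \<Union>(F t)" for t
  proof -
    have "\<And>S. S \<in> F t \<Longrightarrow> open S"
      unfolding F_def using open_cube by auto
    from Lindelof[OF this] show ?thesis
      by metis
  qed
  then obtain F' where F': "\<And>t. F' t \<subseteq> F t" "\<And>t. countable (F' t)" "\<And>t. \<Union>(F' t) = \<Union>(F t)"
    by metis
  have "box 0 One \<in> (cubes :: 'a set set)"
    using box_in_cubes[of 1 0] by simp
  show thesis
  proof (rule that[of "insert (box 0 One) (\<Union>t. F' t)"])
    show "countable (insert (box 0 One) (\<Union>t. F' t))"
      using F'(2) by auto
    show "insert (box 0 One) (\<Union>t. F' t) \<subseteq> cubes"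
      using F'(1) \<open>box 0 One \<in> cubes\<close> unfolding F_def by auto
    show "\<exists>Q'\<in>insert (box 0 One) (\<Union>t. F' t). x \<in> Q' \<and> ennreal (real_of_rat t) < average h Q'"
      if "Q \<in> cubes" "x \<in> Q" "ennreal (real_of_rat t) < average h Q" for t x Q
    proof -
      have "x \<in> \<Union>(F' t)"
        unfolding F'(3) F_def using that by auto
      then obtain Q' where "Q' \<in> F' t" "x \<in> Q'"
        by auto
      then show ?thesis
        using F'(1)[of t] unfolding F_def by blast
    qed
  qed simp
qed

lemma maximal_eq_SUP_countable:
  obtains Qs :: "nat \<Rightarrow> 'a::euclidean_space set" where "\<And>i. Qs i \<in> cubes"
    "\<And>x. maximal h x = (SUP i. if x \<in> Qs i then average h (Qs i) else 0)"
proof -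
  obtain CC :: "'a set set" where CC: "countable CC" "CC \<noteq> {}" "CC \<subseteq> cubes"
    "\<And>t x Q. Q \<in> cubes \<Longrightarrow> x \<in> Q \<Longrightarrow> ennreal (real_of_rat t) < average h Q \<Longrightarrow>
       \<exists>Q'\<in>CC. x \<in> Q' \<and> ennreal (real_of_rat t) < average h Q'"
    using countable_cubes_exhaust_levels[of h] by blast
  define Qs where "Qs = from_nat_into CC"
  have range_Qs: "range Qs = CC"
    unfolding Qs_def using CC by simp
  have Qs: "Qs i \<in> cubes" for i
    using range_Qs CC by auto
  define S where "S x = (SUP i. if x \<in> Qs i then average h (Qs i) else 0)" for x
  have "maximal h x = S x" for x
  proof (rule antisym)
    show "S x \<le> maximal h x"
      unfolding S_def by (rule SUP_least) (auto intro: average_le_maximal Qs)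
    show "maximal h x \<le> S x"
    proof (rule ccontr)
      assume "\<not> maximal h x \<le> S x"
      then have "S x < maximal h x"
        by simp
      then obtain t :: rat where t: "S x < real_of_rat t" "real_of_rat t < maximal h x"
        using ennreal_rat_dense by blast
      then obtain Q where "Q \<in> cubes" "x \<in> Q" "ennreal (real_of_rat t) < average h Q"
        unfolding maximal_eq_SUP_average less_SUP_iff by auto
      then obtain Q' where Q': "Q' \<in> CC" "x \<in> Q'" "ennreal (real_of_rat t) < average h Q'"
        using CC(4) by blast
      then have "Q' \<in> range Qs"
        unfolding range_Qs by blast
      then obtain i where "Qs i = Q'"
        by blast
      then have "ennreal (real_of_rat t) < S x"
        unfolding S_def using Q' by (intro less_le_trans[OF _ SUP_upper2[of i]]) auto
      then show False
        using t(1) by simp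
    qed
  qed
  then show thesis
    using that Qs unfolding S_def by blast
qed

lemma borel_measurable_maximal: "maximal h \<in> borel_measurable lebesgue"
proof -
  obtain Qs :: "nat \<Rightarrow> 'a set" where Qs: "\<And>i. Qs i \<in> cubes"
    "\<And>x. maximal h x = (SUP i. if x \<in> Qs i then average h (Qs i) else 0)"
    using maximal_eq_SUP_countable by metis
  have [measurable]: "Qs i \<in> sets lebesgue" for i
    using cube_in_sets_lebesgue[OF Qs(1)] .
  have "maximal h = (\<lambda>x. SUP i. if x \<in> Qs i then average h (Qs i) else 0)"
    using Qs(2) by auto
  also have "\<dots> \<in> borel_measurable lebesgue"
    by measurable
  finally show ?thesis .
qed

lemma SUP_lessThan_SUP:
  fixes f :: "nat \<Rightarrow> 'a::complete_lattice"
  shows "(SUP N. SUP i\<in>{..<N}. f i) = (SUP i. f i)"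
proof (rule antisym)
  show "(SUP N. SUP i\<in>{..<N}. f i) \<le> (SUP i. f i)"
    by (intro SUP_least SUP_mono) auto
  show "(SUP i. f i) \<le> (SUP N. SUP i\<in>{..<N}. f i)"
  proof (rule SUP_least)
    fix i
    have "f i \<le> (SUP j\<in>{..<Suc i}. f j)"
      by (rule SUP_upper) auto
    also have "\<dots> \<le> (SUP N. SUP j\<in>{..<N}. f j)"
      by (rule SUP_upper) auto
    finally show "f i \<le> (SUP N. SUP j\<in>{..<N}. f j)" .
  qed
qed

section \<open>Linearisation of finite maxima\<close>

definition first_max_part :: "(nat \<Rightarrow> 'a set) \<Rightarrow> (nat \<Rightarrow> 'b::linorder) \<Rightarrow> nat \<Rightarrow> nat \<Rightarrow> 'a set" where
  "first_max_part Qs a N i =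
     {x \<in> Qs i. (\<forall>j<N. x \<in> Qs j \<longrightarrow> a j \<le> a i) \<and> (\<forall>j<i. x \<in> Qs j \<longrightarrow> a j < a i)}"

lemma first_max_part_subset: "first_max_part Qs a N i \<subseteq> Qs i"
  unfolding first_max_part_def by auto

lemma first_max_part_disjoint:
  "i < N \<Longrightarrow> k < N \<Longrightarrow> x \<in> first_max_part Qs a N i \<Longrightarrow> x \<in> first_max_part Qs a N k \<Longrightarrow> i = k"
  unfolding first_max_part_def by (metis (no_types, lifting) linorder_neqE_nat mem_Collect_eq not_le)

lemma first_max_part_cover:
  assumes "j < N" "x \<in> Qs j"
  obtains i where "i < N" "x \<in> first_max_part Qs a N i"
proof -
  define A where "A = {j. j < N \<and> x \<in> Qs j}"
  have A: "finite A" "A \<noteq> {}"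
    unfolding A_def using assms by auto
  define P where "P i \<longleftrightarrow> i \<in> A \<and> (\<forall>j\<in>A. a j \<le> a i)" for i
  have "Max (a ` A) \<in> a ` A"
    using A by simp
  then obtain k where "k \<in> A" "a k = Max (a ` A)"
    by auto
  then have "P k"
    unfolding P_def using A by auto
  define i where "i = (LEAST i. P i)"
  have "P i"
    unfolding i_def by (rule LeastI) (rule \<open>P k\<close>)
  have "a j < a i" if "j < i" "x \<in> Qs j" for j
  proof (rule ccontr)
    assume "\<not> a j < a i"
    then have "P j"
      using \<open>P i\<close> that unfolding P_def A_def by force
    then show False
      using not_less_Least[OF that(1)[unfolded i_def]] by blast
  qed
  then show thesis
    using \<open>P i\<close> by (intro that[of i]) (auto simp: P_def A_def first_max_part_def)
qed

lemma sets_first_max_part: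
  assumes "\<And>i. Qs i \<in> sets M" "space M = UNIV"
  shows "first_max_part Qs a N i \<in> sets M"
proof -
  have [measurable]: "Qs j \<in> sets M" for j
    using assms(1) .
  have "first_max_part Qs a N i = {x \<in> space M. x \<in> Qs i \<and> (\<forall>j<N. x \<in> Qs j \<longrightarrow> a j \<le> a i) \<and>
      (\<forall>j<i. x \<in> Qs j \<longrightarrow> a j < a i)}"
    unfolding first_max_part_def using assms(2) by auto
  also have "\<dots> \<in> sets M"
    by measurable
  finally show ?thesis .
qed

lemma sum_first_max_part_single:
  fixes b :: "nat \<Rightarrow> ennreal"
  assumes "i0 < N" "x \<in> first_max_part Qs a N i0"
  shows "(\<Sum>i<N. indicator (first_max_part Qs a N i) x * b i) = b i0"
proof -
  have "indicator (first_max_part Qs a N i) x * b i = (if i = i0 then b i0 else 0)" if "i < N" for i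
  proof (cases "i = i0")
    case False
    then have "x \<notin> first_max_part Qs a N i"
      using first_max_part_disjoint[OF that assms(1) _ assms(2)] by blast
    then show ?thesis
      using False by simp
  qed (use assms in simp)
  then have "(\<Sum>i<N. indicator (first_max_part Qs a N i) x * b i) = (\<Sum>i<N. if i = i0 then b i0 else 0)"
    by (intro sum.cong) auto
  then show ?thesis
    using assms(1) by simp
qed

lemma sum_first_max_part_le:
  fixes b :: "nat \<Rightarrow> ennreal"
  assumes "\<And>i. i < N \<Longrightarrow> x \<in> Qs i \<Longrightarrow> b i \<le> m"
  shows "(\<Sum>i<N. indicator (first_max_part Qs a N i) x * b i) \<le> m"
proof (cases "\<exists>i<N. x \<in> first_max_part Qs a N i")
  case True
  then obtain i0 where i0: "i0 < N" "x \<in> first_max_part Qs a N i0"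
    by blast
  have "b i0 \<le> m"
    using assms[OF i0(1)] subsetD[OF first_max_part_subset i0(2)] by blast
  then show ?thesis
    using sum_first_max_part_single[OF i0] by simp
next
  case False
  then have "(\<Sum>i<N. indicator (first_max_part Qs a N i) x * b i) = 0"
    by (intro sum.neutral) (simp split: split_indicator)
  then show ?thesis
    by simp
qed

lemma sum_first_max_part_eq_SUP:
  fixes a :: "nat \<Rightarrow> ennreal"
  shows "(\<Sum>i<N. indicator (first_max_part Qs a N i) x * a i) = (SUP i\<in>{..<N}. if x \<in> Qs i then a i else 0)"
    (is "?sum = ?sup")
proof (cases "\<exists>j<N. x \<in> Qs j")
  case True
  then obtain i where i: "i < N" "x \<in> first_max_part Qs a N i"
    using first_max_part_cover by metis
  have "?sum = a i"
    using sum_first_max_part_single[OF i] .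
  also have "a i = ?sup"
  proof (rule antisym)
    show "a i \<le> ?sup"
      using i unfolding first_max_part_def by (intro SUP_upper2[of i]) auto
    show "?sup \<le> a i"
      using i(2) unfolding first_max_part_def by (intro SUP_least) auto
  qed
  finally show ?thesis .
next
  case False
  then have "x \<notin> first_max_part Qs a N i" if "i < N" for i
    using False that first_max_part_subset[of Qs a N i] by blast
  then have "?sum = 0"
    by (intro sum.neutral) (simp split: split_indicator)
  moreover have "?sup = 0"
    using False by (intro antisym SUP_least) auto
  ultimately show ?thesis
    by simp
qed

definition average_adjoint ::
    "(nat \<Rightarrow> 'a::euclidean_space set) \<Rightarrow> (nat \<Rightarrow> 'a set) \<Rightarrow> nat \<Rightarrow> ('a \<Rightarrow> ennreal) \<Rightarrow> 'a \<Rightarrow> ennreal" where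
  "average_adjoint Qs E N w y =
     (\<Sum>i<N. (\<integral>\<^sup>+x. indicator (E i) x * w x \<partial>lebesgue) / emeasure lebesgue (Qs i) * indicator (Qs i) y)"

lemma borel_measurable_average_adjoint:
  assumes [measurable]: "\<And>i. Qs i \<in> sets lebesgue"
  shows "average_adjoint Qs E N w \<in> borel_measurable lebesgue"
  unfolding average_adjoint_def by measurable

lemma nn_integral_average_adjoint:
  assumes [measurable]: "\<And>i. Qs i \<in> sets lebesgue" "\<And>i. E i \<in> sets lebesgue"
    "f \<in> borel_measurable lebesgue" "w \<in> borel_measurable lebesgue"
  shows "(\<integral>\<^sup>+x. (\<Sum>i<N. indicator (E i) x * average f (Qs i)) * w x \<partial>lebesgue) =
    (\<integral>\<^sup>+y. ennreal \<bar>f y\<bar> * average_adjoint Qs E N w y \<partial>lebesgue)"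
proof -
  define c where "c i = (\<integral>\<^sup>+x. indicator (E i) x * w x \<partial>lebesgue)" for i
  have "(\<integral>\<^sup>+x. (\<Sum>i<N. indicator (E i) x * average f (Qs i)) * w x \<partial>lebesgue) =
      (\<Sum>i<N. \<integral>\<^sup>+x. average f (Qs i) * (indicator (E i) x * w x) \<partial>lebesgue)"
    unfolding sum_distrib_right
    by (subst nn_integral_sum[symmetric]) (measurable, intro nn_integral_cong sum.cong refl, simp only: mult_ac)
  also have "\<dots> = (\<Sum>i<N. average f (Qs i) * c i)"
    unfolding c_def by (intro sum.cong refl nn_integral_cmult) measurable
  also have "\<dots> = (\<Sum>i<N. c i / emeasure lebesgue (Qs i) * \<integral>\<^sup>+y. ennreal \<bar>f y\<bar> * indicator (Qs i) y \<partial>lebesgue)"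
    unfolding average_def by (intro sum.cong refl) (simp only: ennreal_times_divide ennreal_divide_times mult.commute)
  also have "\<dots> = (\<Sum>i<N. \<integral>\<^sup>+y. c i / emeasure lebesgue (Qs i) * (ennreal \<bar>f y\<bar> * indicator (Qs i) y) \<partial>lebesgue)"
    by (intro sum.cong refl nn_integral_cmult[symmetric]) measurable
  also have "\<dots> = (\<integral>\<^sup>+y. ennreal \<bar>f y\<bar> * average_adjoint Qs E N w y \<partial>lebesgue)"
    unfolding average_adjoint_def c_def sum_distrib_left
    by (subst nn_integral_sum[symmetric]) (measurable, intro nn_integral_cong sum.cong refl, simp only: mult_ac)
  finally show ?thesis .
qed

section \<open>Koethe duals\<close>

lemma ennreal_suminf_upper: "(f :: nat \<Rightarrow> ennreal) n \<le> (\<Sum>i. f i)"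
  using sum_le_suminf[of f "{n}"] by simp

lemma tendsto_enn2real_finite:
  assumes "(u \<longlongrightarrow> a) F" "a \<noteq> \<infinity>"
  shows "((\<lambda>n. enn2real (u n)) \<longlongrightarrow> enn2real a) F"
proof -
  obtain l where "a = ennreal l" "l \<ge> 0"
    using assms(2) by (cases a) auto
  then show ?thesis
    using assms(1) tendsto_enn2real[of u l F] by simp
qed

lemma nn_integral_enn2real_le:
  "(\<integral>\<^sup>+x. ennreal \<bar>f x * enn2real (G x)\<bar> \<partial>M) \<le> (\<integral>\<^sup>+x. ennreal \<bar>f x\<bar> * G x \<partial>M)"
proof (intro nn_integral_mono)
  fix x
  have "ennreal (enn2real (G x)) \<le> G x"
    by (cases "G x") auto
  then show "ennreal \<bar>f x * enn2real (G x)\<bar> \<le> ennreal \<bar>f x\<bar> * G x"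
    by (simp add: abs_mult ennreal_mult mult_left_mono)
qed

lemma nn_integral_mult_le_if_AE_dominated:
  assumes "c \<ge> 0" "AE x in M. c * \<bar>f x\<bar> \<le> \<bar>S x\<bar>"
    and [measurable]: "f \<in> borel_measurable M" "g \<in> borel_measurable M"
  shows "ennreal c * (\<integral>\<^sup>+x. ennreal \<bar>f x * g x\<bar> \<partial>M) \<le> (\<integral>\<^sup>+x. ennreal \<bar>S x * g x\<bar> \<partial>M)"
proof -
  have "ennreal c * (\<integral>\<^sup>+x. ennreal \<bar>f x * g x\<bar> \<partial>M) = (\<integral>\<^sup>+x. ennreal (c * \<bar>f x\<bar> * \<bar>g x\<bar>) \<partial>M)"
    using assms(1) by (subst nn_integral_cmult[symmetric])
      (auto intro!: nn_integral_cong simp: ennreal_mult[symmetric] abs_mult mult.assoc)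
  also have "\<dots> \<le> (\<integral>\<^sup>+x. ennreal \<bar>S x * g x\<bar> \<partial>M)"
    using assms(2) by (intro nn_integral_mono_AE)
      (auto simp: abs_mult intro: ennreal_leI mult_right_mono elim!: eventually_mono)
  finally show ?thesis .
qed

lemma kothe_subset_borel: "kothe Z \<subseteq> borel_measurable lebesgue"
  unfolding kothe_def by auto

lemma kothe_cmult: "g \<in> kothe Z \<Longrightarrow> (\<lambda>x. c * g x) \<in> kothe Z"
  unfolding kothe_def by (auto intro: integrable_mult_right[of c] simp: mult.left_commute[of _ c])

lemma kothe_norm_cmult:
  assumes Z_borel: "Z \<subseteq> borel_measurable lebesgue"
    and [measurable]: "g \<in> borel_measurable lebesgue" and "c \<ge> 0"
  shows "kothe_norm Z nZ (\<lambda>x. c * g x) = ennreal c * kothe_norm Z nZ g"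
proof -
  have "(\<integral>\<^sup>+x. ennreal \<bar>f x * (c * g x)\<bar> \<partial>lebesgue) = ennreal c * (\<integral>\<^sup>+x. ennreal \<bar>f x * g x\<bar> \<partial>lebesgue)"
    if "f \<in> Z" for f
  proof -
    have [measurable]: "f \<in> borel_measurable lebesgue"
      using that Z_borel by blast
    have "(\<integral>\<^sup>+x. ennreal \<bar>f x * (c * g x)\<bar> \<partial>lebesgue) = (\<integral>\<^sup>+x. ennreal c * ennreal \<bar>f x * g x\<bar> \<partial>lebesgue)"
      using \<open>c \<ge> 0\<close> by (intro nn_integral_cong) (simp add: ennreal_mult[symmetric] abs_mult)
    also have "\<dots> = ennreal c * (\<integral>\<^sup>+x. ennreal \<bar>f x * g x\<bar> \<partial>lebesgue)"
      by (rule nn_integral_cmult) measurable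
    finally show ?thesis .
  qed
  then show ?thesis
    unfolding kothe_norm_def SUP_mult_left_ennreal by (intro SUP_cong) auto
qed

lemma nn_integral_le_kothe_norm:
  fixes nZ :: "('a::euclidean_space \<Rightarrow> real) \<Rightarrow> ennreal"
  assumes Z_borel: "Z \<subseteq> borel_measurable lebesgue"
    and scale: "\<And>f c. f \<in> Z \<Longrightarrow> c > 0 \<Longrightarrow> (\<lambda>x. c * f x) \<in> Z \<and> nZ (\<lambda>x. c * f x) = ennreal c * nZ f"
    and null: "\<And>f. f \<in> Z \<Longrightarrow> nZ f = 0 \<Longrightarrow> AE x in lebesgue. f x = 0"
    and f: "f \<in> Z" "nZ f \<noteq> \<infinity>" and g[measurable]: "g \<in> borel_measurable lebesgue"
  shows "(\<integral>\<^sup>+x. ennreal \<bar>f x * g x\<bar> \<partial>lebesgue) \<le> kothe_norm Z nZ g * nZ f"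
proof (cases "nZ f = 0")
  case True
  have "AE x in lebesgue. ennreal \<bar>f x * g x\<bar> = 0"
    using null[OF f(1) True] by eventually_elim simp
  then show ?thesis
    using nn_integral_cong_AE by fastforce
next
  case False
  obtain c where c: "nZ f = ennreal c" "c > 0"
    using f(2) False by (cases "nZ f") (auto simp: ennreal_eq_0_iff)
  define f' where "f' = (\<lambda>x. (1 / c) * f x)"
  have f': "f' \<in> Z" "nZ f' = 1"
    using scale[OF f(1), of "1 / c"] c by (auto simp: f'_def ennreal_mult[symmetric])
  have [measurable]: "f' \<in> borel_measurable lebesgue"
    using f' Z_borel by blast
  have "(\<integral>\<^sup>+x. ennreal \<bar>f x * g x\<bar> \<partial>lebesgue) = (\<integral>\<^sup>+x. ennreal c * ennreal \<bar>f' x * g x\<bar> \<partial>lebesgue)"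
    using c by (intro nn_integral_cong) (simp add: f'_def ennreal_mult[symmetric] abs_mult)
  also have "\<dots> = ennreal c * (\<integral>\<^sup>+x. ennreal \<bar>f' x * g x\<bar> \<partial>lebesgue)"
    by (rule nn_integral_cmult) measurable
  also have "\<dots> \<le> ennreal c * kothe_norm Z nZ g"
    unfolding kothe_norm_def using f' by (intro mult_left_mono SUP_upper) auto
  finally show ?thesis
    by (simp add: c mult.commute)
qed

lemma enn2real_in_kothe:
  assumes Z_borel: "Z \<subseteq> borel_measurable lebesgue" and [measurable]: "G \<in> borel_measurable lebesgue"
    and finite: "\<And>f. f \<in> Z \<Longrightarrow> (\<integral>\<^sup>+x. ennreal \<bar>f x\<bar> * G x \<partial>lebesgue) < \<infinity>"
  shows "(\<lambda>x. enn2real (G x)) \<in> kothe Z"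
  unfolding kothe_def
proof (intro CollectI conjI ballI)
  fix f assume "f \<in> Z"
  then have [measurable]: "f \<in> borel_measurable lebesgue"
    using Z_borel by blast
  have "(\<integral>\<^sup>+x. ennreal (norm (f x * enn2real (G x))) \<partial>lebesgue) < \<infinity>"
    using le_less_trans[OF nn_integral_enn2real_le finite[OF \<open>f \<in> Z\<close>]] by simp
  then show "integrable lebesgue (\<lambda>x. f x * enn2real (G x))"
    by (intro integrableI_bounded) measurable
qed measurable

lemma kothe_norm_enn2real_le:
  assumes "\<And>f. f \<in> Z \<Longrightarrow> nZ f = 1 \<Longrightarrow> (\<integral>\<^sup>+x. ennreal \<bar>f x\<bar> * G x \<partial>lebesgue) \<le> c"
  shows "kothe_norm Z nZ (\<lambda>x. enn2real (G x)) \<le> c"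
  unfolding kothe_norm_def
proof (rule SUP_least)
  fix f assume "f \<in> {f \<in> Z. nZ f = 1}"
  then show "(\<integral>\<^sup>+x. ennreal \<bar>f x * enn2real (G x)\<bar> \<partial>lebesgue) \<le> c"
    using order_trans[OF nn_integral_enn2real_le assms[of f]] by simp
qed

text \<open>If the norm were infinite, a normalised sequence would test \<open>g\<close> with integrals growing faster
  than the inverse weights, and the function dominating it would not be integrable against \<open>g\<close>.\<close>
lemma kothe_norm_less_top:
  fixes nZ :: "('a::euclidean_space \<Rightarrow> real) \<Rightarrow> 'b::one"
  assumes Z_borel: "Z \<subseteq> borel_measurable lebesgue" and r: "r > 0"
    and dominated: "\<And>fs. (\<And>n. fs n \<in> Z) \<Longrightarrow> (\<And>n. nZ (fs n) = 1) \<Longrightarrow>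
        \<exists>S\<in>Z. \<forall>n. AE x in lebesgue. r ^ n * \<bar>fs n x\<bar> \<le> \<bar>S x\<bar>"
    and g: "g \<in> kothe Z"
  shows "kothe_norm Z nZ g < \<infinity>"
proof (rule ccontr)
  assume "\<not> kothe_norm Z nZ g < \<infinity>"
  then have "ennreal ((2 / r) ^ n) < kothe_norm Z nZ g" for n
    using top.not_eq_extremum by fastforce
  then have "\<forall>n. \<exists>f. f \<in> Z \<and> nZ f = 1 \<and> ennreal ((2 / r) ^ n) < (\<integral>\<^sup>+x. ennreal \<bar>f x * g x\<bar> \<partial>lebesgue)"
    unfolding kothe_norm_def less_SUP_iff by blast
  then obtain fs where fs: "\<And>n. fs n \<in> Z" "\<And>n. nZ (fs n) = 1"
    "\<And>n. ennreal ((2 / r) ^ n) < (\<integral>\<^sup>+x. ennreal \<bar>fs n x * g x\<bar> \<partial>lebesgue)"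
    by metis
  obtain S where S: "S \<in> Z" "\<And>n. AE x in lebesgue. r ^ n * \<bar>fs n x\<bar> \<le> \<bar>S x\<bar>"
    using dominated[of fs, OF fs(1) fs(2)] by blast
  have [measurable]: "g \<in> borel_measurable lebesgue" "fs n \<in> borel_measurable lebesgue" for n
    using g fs(1) Z_borel kothe_subset_borel by blast+
  have "integrable lebesgue (\<lambda>x. S x * g x)"
    using g S(1) unfolding kothe_def by blast
  then have "(\<integral>\<^sup>+x. ennreal \<bar>S x * g x\<bar> \<partial>lebesgue) < top"
    by (simp add: integrable_iff_bounded)
  then obtain v where v: "(\<integral>\<^sup>+x. ennreal \<bar>S x * g x\<bar> \<partial>lebesgue) = ennreal v" "v \<ge> 0"
    unfolding less_top_ennreal by blast
  have "ennreal (2 ^ n) \<le> ennreal v" for n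
  proof -
    have "ennreal (2 ^ n) = ennreal (r ^ n) * ennreal ((2 / r) ^ n)"
      using r by (simp add: ennreal_mult[symmetric] power_divide)
    also have "\<dots> \<le> ennreal (r ^ n) * (\<integral>\<^sup>+x. ennreal \<bar>fs n x * g x\<bar> \<partial>lebesgue)"
      using fs(3)[of n] by (intro mult_left_mono) auto
    also have "\<dots> \<le> (\<integral>\<^sup>+x. ennreal \<bar>S x * g x\<bar> \<partial>lebesgue)"
      using r S(2) by (intro nn_integral_mult_le_if_AE_dominated) auto
    finally show ?thesis
      using v by simp
  qed
  then have "2 ^ n \<le> v" for n :: nat
    using v(2) by (simp add: ennreal_le_iff)
  moreover obtain n :: nat where "v < 2 ^ n"
    using real_arch_pow[of 2 v] by auto
  ultimately show False
    by (meson not_le)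
qed

section \<open>Quasi-Banach function spaces and their duals\<close>

locale qbfs_space =
  fixes X :: "('a::euclidean_space \<Rightarrow> real) set" and nX :: "('a \<Rightarrow> real) \<Rightarrow> real"
  assumes qbfs: "qbfs X nX"
begin

abbreviation X' :: "('a \<Rightarrow> real) set" where "X' \<equiv> kothe X"
abbreviation nX' :: "('a \<Rightarrow> real) \<Rightarrow> ennreal" where "nX' \<equiv> kothe_norm X nX"
abbreviation X'' :: "('a \<Rightarrow> real) set" where "X'' \<equiv> kothe X'"
abbreviation nX'' :: "('a \<Rightarrow> real) \<Rightarrow> ennreal" where "nX'' \<equiv> kothe_norm X' nX'"

lemma space_subset_borel: "X \<subseteq> borel_measurable lebesgue"
  using qbfs unfolding qbfs_def by blast

lemma zero_in_space: "(\<lambda>x. 0) \<in> X"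
  using qbfs unfolding qbfs_def by blast

lemma add_in_space: "f \<in> X \<Longrightarrow> g \<in> X \<Longrightarrow> (\<lambda>x. f x + g x) \<in> X"
  using qbfs unfolding qbfs_def by blast

lemma cmult_in_space: "f \<in> X \<Longrightarrow> (\<lambda>x. c * f x) \<in> X"
  using qbfs unfolding qbfs_def by blast

lemma norm_nonneg: "f \<in> X \<Longrightarrow> 0 \<le> nX f"
  using qbfs unfolding qbfs_def by blast

lemma norm_eq_0_iff: "f \<in> X \<Longrightarrow> nX f = 0 \<longleftrightarrow> (AE x in lebesgue. f x = 0)"
  using qbfs unfolding qbfs_def by blast

lemma norm_cmult: "f \<in> X \<Longrightarrow> nX (\<lambda>x. c * f x) = \<bar>c\<bar> * nX f"
  using qbfs unfolding qbfs_def by blast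

lemma quasi_triangle:
  obtains K where "K \<ge> 1" "\<And>f g. f \<in> X \<Longrightarrow> g \<in> X \<Longrightarrow> nX (\<lambda>x. f x + g x) \<le> K * (nX f + nX g)"
proof -
  have "\<exists>K\<ge>1. \<forall>f\<in>X. \<forall>g\<in>X. nX (\<lambda>x. f x + g x) \<le> K * (nX f + nX g)"
    using qbfs unfolding qbfs_def by blast
  then show thesis
    using that by blast
qed

lemma ideal:
  "f \<in> X \<Longrightarrow> g \<in> borel_measurable lebesgue \<Longrightarrow> (AE x in lebesgue. \<bar>g x\<bar> \<le> \<bar>f x\<bar>) \<Longrightarrow>
    g \<in> X \<and> nX g \<le> nX f"
  using qbfs unfolding qbfs_def by blast

lemma saturation:
  "E \<in> sets lebesgue \<Longrightarrow> emeasure lebesgue E > 0 \<Longrightarrow>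
    \<exists>F\<in>sets lebesgue. F \<subseteq> E \<and> emeasure lebesgue F > 0 \<and> indicator F \<in> X"
  using qbfs unfolding qbfs_def by blast

lemma AE_by_saturation:
  assumes "{x \<in> space lebesgue. \<not> P x} \<in> sets lebesgue"
    and "\<And>F. F \<in> sets lebesgue \<Longrightarrow> F \<subseteq> {x. \<not> P x} \<Longrightarrow> indicator F \<in> X \<Longrightarrow> emeasure lebesgue F = 0"
  shows "AE x in lebesgue. P x"
proof (rule ccontr)
  assume "\<not> (AE x in lebesgue. P x)"
  then have "emeasure lebesgue {x \<in> space lebesgue. \<not> P x} > 0"
    using AE_iff_measurable[OF assms(1)] by (simp add: zero_less_iff_neq_zero)
  then obtain F where "F \<in> sets lebesgue" "F \<subseteq> {x \<in> space lebesgue. \<not> P x}"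
    "emeasure lebesgue F > 0" "indicator F \<in> X"
    using saturation[OF assms(1)] by blast
  then show False
    using assms(2)[of F] by simp
qed

lemma nn_integral_le_dual_norm:
  assumes "f \<in> X" "g \<in> borel_measurable lebesgue"
  shows "(\<integral>\<^sup>+x. ennreal \<bar>f x * g x\<bar> \<partial>lebesgue) \<le> nX' g * ennreal (nX f)"
proof -
  have scale: "(\<lambda>x. c * f x) \<in> X \<and> ennreal (nX (\<lambda>x. c * f x)) = ennreal c * ennreal (nX f)"
    if "f \<in> X" "c > 0" for f c
    using cmult_in_space[OF that(1)] norm_cmult[OF that(1), of c] norm_nonneg[OF that(1)] that(2)
    by (simp add: ennreal_mult)
  have null: "AE x in lebesgue. f x = 0" if "f \<in> X" "ennreal (nX f) = 0" for f
    using that norm_eq_0_iff[OF that(1)] norm_nonneg[OF that(1)] by (simp add: ennreal_eq_0_iff)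
  have "(\<integral>\<^sup>+x. ennreal \<bar>f x * g x\<bar> \<partial>lebesgue) \<le> kothe_norm X (\<lambda>f. ennreal (nX f)) g * ennreal (nX f)"
    by (rule nn_integral_le_kothe_norm[where nZ = "\<lambda>f. ennreal (nX f)",
          OF space_subset_borel scale null assms(1) ennreal_neq_top[folded infinity_ennreal_def] assms(2)])
  also have "kothe_norm X (\<lambda>f. ennreal (nX f)) = nX'"
    unfolding kothe_norm_def by simp
  finally show ?thesis .
qed

lemma AE_eq_0_if_dual_norm_eq_0:
  assumes g[measurable]: "g \<in> borel_measurable lebesgue" and "nX' g = 0"
  shows "AE x in lebesgue. g x = 0"
proof (rule AE_by_saturation)
  fix F assume F[measurable]: "F \<in> sets lebesgue" and "F \<subseteq> {x. g x \<noteq> 0}" "indicator F \<in> X"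
  have "(\<integral>\<^sup>+x. ennreal \<bar>indicator F x * g x\<bar> \<partial>lebesgue) = 0"
    using nn_integral_le_dual_norm[OF \<open>indicator F \<in> X\<close> g] \<open>nX' g = 0\<close> by simp
  then have "AE x in lebesgue. ennreal \<bar>indicator F x * g x\<bar> = 0"
    by (subst (asm) nn_integral_0_iff_AE) measurable
  then have "AE x in lebesgue. x \<notin> F"
    by eventually_elim (use \<open>F \<subseteq> {x. g x \<noteq> 0}\<close> in \<open>auto split: split_indicator\<close>)
  then show "emeasure lebesgue F = 0"
    using AE_iff_measurable[OF F, of "\<lambda>x. x \<notin> F"] by simp
qed measurable

lemma AE_finite_if_nn_integral_finite:
  assumes [measurable]: "G \<in> borel_measurable lebesgue"
    and finite: "\<And>f. f \<in> X \<Longrightarrow> (\<integral>\<^sup>+x. ennreal \<bar>f x\<bar> * G x \<partial>lebesgue) < \<infinity>"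
  shows "AE x in lebesgue. G x \<noteq> \<infinity>"
proof (rule AE_by_saturation)
  fix F assume F[measurable]: "F \<in> sets lebesgue" and "F \<subseteq> {x. \<not> G x \<noteq> \<infinity>}" "indicator F \<in> X"
  have "(\<integral>\<^sup>+x. ennreal \<bar>indicator F x\<bar> * G x \<partial>lebesgue) = (\<integral>\<^sup>+x. \<infinity> * indicator F x \<partial>lebesgue)"
    using \<open>F \<subseteq> _\<close> by (intro nn_integral_cong) (auto split: split_indicator)
  also have "\<dots> = \<infinity> * emeasure lebesgue F"
    by (simp add: nn_integral_cmult_indicator)
  finally show "emeasure lebesgue F = 0"
    using finite[OF \<open>indicator F \<in> X\<close>] by (auto simp: ennreal_top_mult split: if_splits)
qed measurable

lemma sum_in_space:
  assumes "K \<ge> 1" and triangle: "\<And>f g. f \<in> X \<Longrightarrow> g \<in> X \<Longrightarrow> nX (\<lambda>x. f x + g x) \<le> K * (nX f + nX g)"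
    and "\<And>j. b j \<in> X"
  shows "(\<lambda>x. \<Sum>j<n. b j x) \<in> X \<and> nX (\<lambda>x. \<Sum>j<n. b j x) \<le> (\<Sum>j<n. K ^ (j + 1) * nX (b j))"
  using assms(3)
proof (induction n arbitrary: b)
  case 0
  then show ?case
    using zero_in_space norm_eq_0_iff[OF zero_in_space] by simp
next
  case (Suc n)
  have IH: "(\<lambda>x. \<Sum>j<n. b (Suc j) x) \<in> X \<and> nX (\<lambda>x. \<Sum>j<n. b (Suc j) x) \<le> (\<Sum>j<n. K ^ (j + 1) * nX (b (Suc j)))"
    using Suc.IH[of "\<lambda>j. b (Suc j)"] Suc.prems by blast
  have split: "(\<lambda>x. \<Sum>j<Suc n. b j x) = (\<lambda>x. b 0 x + (\<Sum>j<n. b (Suc j) x))"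
    by (simp del: sum.lessThan_Suc add: sum.lessThan_Suc_shift)
  have "nX (\<lambda>x. \<Sum>j<Suc n. b j x) \<le> K * (nX (b 0) + nX (\<lambda>x. \<Sum>j<n. b (Suc j) x))"
    unfolding split using triangle Suc.prems IH by blast
  also have "\<dots> \<le> K * (nX (b 0) + (\<Sum>j<n. K ^ (j + 1) * nX (b (Suc j))))"
    using IH \<open>K \<ge> 1\<close> by (intro mult_left_mono add_left_mono) auto
  also have "\<dots> = (\<Sum>j<Suc n. K ^ (j + 1) * nX (b j))"
    by (simp del: sum.lessThan_Suc add: sum.lessThan_Suc_shift sum_distrib_left algebra_simps)
  finally show ?case
    unfolding split using add_in_space Suc.prems IH by blast
qed

lemma AE_not_in_if_multiples_bounded:
  assumes [measurable]: "E \<in> sets lebesgue"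
    and multiples: "\<And>k :: nat. (\<lambda>x. real k * indicator E x) \<in> X \<and> nX (\<lambda>x. real k * indicator E x) \<le> B"
  shows "AE x in lebesgue. x \<notin> E"
proof -
  have E_in_space: "indicator E \<in> X"
    using multiples[of 1] by simp
  have "nX (indicator E) = 0"
  proof (rule ccontr)
    assume "nX (indicator E) \<noteq> 0"
    then have "nX (indicator E) > 0"
      using norm_nonneg[OF E_in_space] by simp
    then obtain k :: nat where "B < k * nX (indicator E)"
      using reals_Archimedean2[of "B / nX (indicator E)"] by (auto simp: field_simps)
    then show False
      using multiples[of k] norm_cmult[OF E_in_space, of "real k"] by simp
  qed
  then have "AE x in lebesgue. indicator E x = (0 :: real)"
    using norm_eq_0_iff[OF E_in_space] by simp
  then show ?thesis
    by eventually_elim (simp split: split_indicator_asm)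
qed

text \<open>The dual norm is countably subadditive, so the weights \<open>2\<^sup>-\<^sup>n\<close> suffice.\<close>
lemma nn_integral_dual_series_le:
  assumes gs: "\<And>n. gs n \<in> X'" "\<And>n. nX' (gs n) = 1" and f: "f \<in> X"
  shows "(\<integral>\<^sup>+x. ennreal \<bar>f x\<bar> * (\<Sum>n. ennreal ((1 / 2) ^ n) * ennreal \<bar>gs n x\<bar>) \<partial>lebesgue)
    \<le> ennreal 2 * ennreal (nX f)"
proof -
  have gs_borel[measurable]: "gs n \<in> borel_measurable lebesgue" for n
    using gs(1) kothe_subset_borel by blast
  have [measurable]: "f \<in> borel_measurable lebesgue"
    using f space_subset_borel by blast
  have "(\<integral>\<^sup>+x. ennreal \<bar>f x\<bar> * (\<Sum>n. ennreal ((1 / 2) ^ n) * ennreal \<bar>gs n x\<bar>) \<partial>lebesgue) =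
      (\<integral>\<^sup>+x. (\<Sum>n. ennreal ((1 / 2) ^ n) * ennreal \<bar>f x * gs n x\<bar>) \<partial>lebesgue)"
    unfolding ennreal_suminf_cmult[symmetric]
    by (intro nn_integral_cong suminf_cong) (simp add: ennreal_mult[symmetric] abs_mult mult_ac)
  also have "\<dots> = (\<Sum>n. ennreal ((1 / 2) ^ n) * (\<integral>\<^sup>+x. ennreal \<bar>f x * gs n x\<bar> \<partial>lebesgue))"
    by (subst nn_integral_suminf) (measurable, intro suminf_cong nn_integral_cmult, measurable)
  also have "\<dots> \<le> (\<Sum>n. ennreal ((1 / 2) ^ n) * ennreal (nX f))"
  proof (intro suminf_le mult_left_mono)
    fix n
    show "(\<integral>\<^sup>+x. ennreal \<bar>f x * gs n x\<bar> \<partial>lebesgue) \<le> ennreal (nX f)"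
      using nn_integral_le_dual_norm[OF f gs_borel[of n]] gs(2)[of n] by simp
  qed auto
  also have "\<dots> = (\<Sum>n. ennreal ((1 / 2) ^ n)) * ennreal (nX f)"
    by simp
  also have "(\<Sum>n. ennreal ((1 / 2 :: real) ^ n)) = ennreal 2"
    by (subst suminf_ennreal2) (auto simp: suminf_geometric summable_geometric)
  finally show ?thesis .
qed

lemma dual_dominates_normalised:
  assumes gs: "\<And>n. gs n \<in> X'" "\<And>n. nX' (gs n) = 1"
  shows "\<exists>S\<in>X'. \<forall>n. AE x in lebesgue. (1 / 2) ^ n * \<bar>gs n x\<bar> \<le> \<bar>S x\<bar>"
proof -
  have [measurable]: "gs n \<in> borel_measurable lebesgue" for n
    using gs(1) kothe_subset_borel by blast
  define G where "G x = (\<Sum>n. ennreal ((1 / 2) ^ n) * ennreal \<bar>gs n x\<bar>)" for x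
  have [measurable]: "G \<in> borel_measurable lebesgue"
    unfolding G_def by measurable
  have finite: "(\<integral>\<^sup>+x. ennreal \<bar>f x\<bar> * G x \<partial>lebesgue) < \<infinity>" if "f \<in> X" for f
    using le_less_trans[OF nn_integral_dual_series_le[OF gs that]] unfolding G_def
    by (simp add: ennreal_mult_less_top)
  have dominated: "(1 / 2) ^ n * \<bar>gs n x\<bar> \<le> \<bar>enn2real (G x)\<bar>" if "G x \<noteq> \<infinity>" for n x
  proof -
    have "ennreal ((1 / 2) ^ n) * ennreal \<bar>gs n x\<bar> \<le> G x"
      unfolding G_def by (rule ennreal_suminf_upper)
    then have "ennreal ((1 / 2) ^ n * \<bar>gs n x\<bar>) \<le> G x"
      by (simp add: ennreal_mult)
    then show ?thesis
      using that by (cases "G x") auto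
  qed
  show ?thesis
  proof (intro bexI allI)
    show "(\<lambda>x. enn2real (G x)) \<in> X'"
      by (rule enn2real_in_kothe[OF space_subset_borel _ finite]) measurable
    show "AE x in lebesgue. (1 / 2) ^ n * \<bar>gs n x\<bar> \<le> \<bar>enn2real (G x)\<bar>" for n
      using AE_finite_if_nn_integral_finite[OF _ finite] dominated by (auto elim: eventually_mono)
  qed
qed

lemma bidual_norm_less_top:
  assumes "h \<in> X''"
  shows "nX'' h < \<infinity>"
  by (rule kothe_norm_less_top[OF kothe_subset_borel _ dual_dominates_normalised assms]) simp

end

locale qbfs_fatou = qbfs_space +
  assumes fatou: "fatou_property X nX"
begin

lemma fatou_limit:
  assumes u: "\<And>n. u n \<in> X" "\<And>n x. 0 \<le> u n x" "\<And>n x. u n x \<le> u (Suc n) x" "\<And>n. nX (u n) \<le> B"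
    and f: "f \<in> borel_measurable lebesgue" "AE x in lebesgue. (\<lambda>n. u n x) \<longlonglongrightarrow> f x"
  shows "f \<in> X \<and> nX f \<le> B"
proof -
  have "bdd_above (range (\<lambda>n. nX (u n)))"
    using u(4) by (intro bdd_aboveI[of _ B]) auto
  moreover have "AE x in lebesgue. (\<forall>n. 0 \<le> u n x \<and> u n x \<le> u (Suc n) x) \<and> (\<lambda>n. u n x) \<longlonglongrightarrow> f x"
    using f(2) by eventually_elim (use u(2,3) in auto)
  ultimately have "f \<in> X \<and> nX f = (SUP n. nX (u n))"
    using fatou u(1) f(1) unfolding fatou_property_def by blast
  moreover have "(SUP n. nX (u n)) \<le> B"
    using u(4) by (intro cSUP_least) auto
  ultimately show ?thesis
    by simp
qed

lemma truncated_limit_in_space: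
  fixes k :: nat
  assumes u: "\<And>n. u n \<in> X" "\<And>n x. 0 \<le> u n x" "\<And>n x. u n x \<le> u (Suc n) x" "\<And>n. nX (u n) \<le> B"
  defines "T x \<equiv> enn2real (min (SUP n. ennreal (u n x)) (ennreal k))"
  shows "T \<in> X \<and> nX T \<le> B"
  unfolding T_def
proof (rule fatou_limit)
  have [measurable]: "u n \<in> borel_measurable lebesgue" for n
    using u(1) space_subset_borel by blast
  fix n
  have "(\<lambda>x. min (u n x) k) \<in> X \<and> nX (\<lambda>x. min (u n x) k) \<le> nX (u n)"
    using u(2) by (intro ideal u(1)) auto
  then show "(\<lambda>x. min (u n x) k) \<in> X" "nX (\<lambda>x. min (u n x) k) \<le> B"
    using u(4)[of n] by auto
  show "0 \<le> min (u n x) k" "min (u n x) k \<le> min (u (Suc n) x) k" for x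
    using u(2)[of n x] u(3)[of n x] by (auto simp: min_def)
  show "(\<lambda>x. enn2real (min (SUP n. ennreal (u n x)) (ennreal k))) \<in> borel_measurable lebesgue"
    by measurable
next
  show "AE x in lebesgue. (\<lambda>n. min (u n x) k) \<longlonglongrightarrow> enn2real (min (SUP n. ennreal (u n x)) (ennreal k))"
  proof (intro AE_I2)
    fix x
    have "(\<lambda>n. ennreal (u n x)) \<longlonglongrightarrow> (SUP n. ennreal (u n x))"
      using u(3) by (intro LIMSEQ_SUP incseq_SucI) (simp add: ennreal_leI)
    moreover have "min (SUP n. ennreal (u n x)) (ennreal k) < \<infinity>"
      by (rule min.strict_coboundedI2) simp
    then have "min (SUP n. ennreal (u n x)) (ennreal k) \<noteq> \<infinity>"
      by (rule less_imp_neq)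
    ultimately have "(\<lambda>n. enn2real (min (ennreal (u n x)) (ennreal k))) \<longlonglongrightarrow>
        enn2real (min (SUP n. ennreal (u n x)) (ennreal k))"
      by (intro tendsto_enn2real_finite tendsto_min tendsto_const)
    then show "(\<lambda>n. min (u n x) k) \<longlonglongrightarrow> enn2real (min (SUP n. ennreal (u n x)) (ennreal k))"
      using u(2) by (simp add: min_ennreal)
  qed
qed

text \<open>Truncating at height \<open>k\<close> shows that \<open>k\<close> times the indicator of the set where the limit is
  infinite has norm at most \<open>B\<close>, so this set is null.\<close>
lemma monotone_limit_in_space:
  assumes u: "\<And>n. u n \<in> X" "\<And>n x. 0 \<le> u n x" "\<And>n x. u n x \<le> u (Suc n) x" "\<And>n. nX (u n) \<le> B"
  defines "S x \<equiv> (SUP n. ennreal (u n x))"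
  shows "AE x in lebesgue. S x \<noteq> \<infinity>" "(\<lambda>x. enn2real (S x)) \<in> X"
proof -
  have [measurable]: "u n \<in> borel_measurable lebesgue" for n
    using u(1) space_subset_borel by blast
  have [measurable]: "S \<in> borel_measurable lebesgue"
    unfolding S_def by measurable
  define E where "E = {x \<in> space lebesgue. S x = \<infinity>}"
  have [measurable]: "E \<in> sets lebesgue"
    unfolding E_def by measurable
  have "(\<lambda>x. real k * indicator E x) \<in> X \<and> nX (\<lambda>x. real k * indicator E x) \<le> B" for k :: nat
  proof -
    note truncation = truncated_limit_in_space[where u = u and B = B and k = k, OF u, folded S_def]
    have "(\<lambda>x. real k * indicator E x) \<in> X \<and> nX (\<lambda>x. real k * indicator E x) \<le>
        nX (\<lambda>x. enn2real (min (S x) (ennreal k)))"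
      using truncation by (intro ideal) (auto simp: E_def split: split_indicator)
    then show ?thesis
      using truncation by auto
  qed
  then have "AE x in lebesgue. x \<notin> E"
    by (rule AE_not_in_if_multiples_bounded[rotated]) measurable
  then show S_finite: "AE x in lebesgue. S x \<noteq> \<infinity>"
    by eventually_elim (simp add: E_def)
  have "(\<lambda>x. enn2real (S x)) \<in> X \<and> nX (\<lambda>x. enn2real (S x)) \<le> B"
  proof (rule fatou_limit[of u, OF u])
    show "AE x in lebesgue. (\<lambda>n. u n x) \<longlonglongrightarrow> enn2real (S x)"
      using S_finite
    proof eventually_elim
      case (elim x)
      have "(\<lambda>n. ennreal (u n x)) \<longlonglongrightarrow> S x"
        unfolding S_def using u(3) by (intro LIMSEQ_SUP incseq_SucI) (simp add: ennreal_leI)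
      from tendsto_enn2real_finite[OF this elim] show ?case
        using u(2) by simp
    qed
  qed measurable
  then show "(\<lambda>x. enn2real (S x)) \<in> X"
    by blast
qed

text \<open>The quasi-triangle inequality costs a factor \<open>K\<^sup>j\<^sup>+\<^sup>1\<close> on the \<open>j\<close>-th term, which the weight
  \<open>(2 K)\<^sup>-\<^sup>j\<close> turns into \<open>K 2\<^sup>-\<^sup>j\<close>.\<close>
lemma weighted_partial_sums_in_space:
  assumes K: "K \<ge> 1" and triangle: "\<And>f g. f \<in> X \<Longrightarrow> g \<in> X \<Longrightarrow> nX (\<lambda>x. f x + g x) \<le> K * (nX f + nX g)"
    and fs: "\<And>n. fs n \<in> X" "\<And>n. nX (fs n) = 1"
  defines "P n x \<equiv> (\<Sum>j<n. (1 / (2 * K)) ^ j * \<bar>fs j x\<bar>)"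
  shows "P n \<in> X \<and> nX (P n) \<le> 2 * K"
proof -
  define r where "r = 1 / (2 * K)"
  have "r > 0"
    using K unfolding r_def by simp
  define a where "a j x = r ^ j * \<bar>fs j x\<bar>" for j x
  have a: "a j \<in> X \<and> nX (a j) \<le> r ^ j" for j
  proof -
    have [measurable]: "fs j \<in> borel_measurable lebesgue"
      using fs(1) space_subset_borel by blast
    have abs_fs: "(\<lambda>x. \<bar>fs j x\<bar>) \<in> X \<and> nX (\<lambda>x. \<bar>fs j x\<bar>) \<le> 1"
      using ideal[OF fs(1), of "\<lambda>x. \<bar>fs j x\<bar>"] fs(2) by auto
    then have "nX (a j) = r ^ j * nX (\<lambda>x. \<bar>fs j x\<bar>)"
      unfolding a_def using norm_cmult \<open>r > 0\<close> by simp
    also have "\<dots> \<le> r ^ j"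
      using abs_fs \<open>r > 0\<close> by (simp add: mult_left_le)
    finally show ?thesis
      unfolding a_def using abs_fs cmult_in_space by blast
  qed
  have "P n \<in> X \<and> nX (P n) \<le> (\<Sum>j<n. K ^ (j + 1) * nX (a j))"
    unfolding P_def using sum_in_space[OF K triangle, of a n] a unfolding a_def r_def by blast
  moreover have "(\<Sum>j<n. K ^ (j + 1) * nX (a j)) \<le> (\<Sum>j<n. K * (1 / 2) ^ j)"
  proof (intro sum_mono)
    fix j
    have "K ^ (j + 1) * nX (a j) \<le> K ^ (j + 1) * r ^ j"
      using a K by (intro mult_left_mono) auto
    also have "\<dots> = K * (1 / 2) ^ j"
      unfolding r_def using K by (simp add: power_divide field_simps)
    finally show "K ^ (j + 1) * nX (a j) \<le> K * (1 / 2) ^ j" .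
  qed
  moreover have "(\<Sum>j<n. (1 / 2 :: real) ^ j) \<le> 2"
    using sum_le_suminf[OF summable_geometric[of "1 / 2 :: real"], of "{..<n}"]
      suminf_geometric[of "1 / 2 :: real"] by simp
  then have "(\<Sum>j<n. K * (1 / 2) ^ j) \<le> 2 * K"
    using K by (simp add: sum_distrib_left[symmetric] mult.commute mult_left_mono)
  ultimately show ?thesis
    by linarith
qed

lemma space_dominates_normalised:
  assumes K: "K \<ge> 1" and triangle: "\<And>f g. f \<in> X \<Longrightarrow> g \<in> X \<Longrightarrow> nX (\<lambda>x. f x + g x) \<le> K * (nX f + nX g)"
    and fs: "\<And>n. fs n \<in> X" "\<And>n. nX (fs n) = 1"
  shows "\<exists>S\<in>X. \<forall>n. AE x in lebesgue. (1 / (2 * K)) ^ n * \<bar>fs n x\<bar> \<le> \<bar>S x\<bar>"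
proof -
  define P where "P n x = (\<Sum>j<n. (1 / (2 * K)) ^ j * \<bar>fs j x\<bar>)" for n x
  have term_nonneg: "0 \<le> (1 / (2 * K)) ^ j * \<bar>fs j x\<bar>" for j x
    using K by simp
  have P_nonneg: "0 \<le> P n x" and P_mono: "P n x \<le> P (Suc n) x" for n x
    unfolding P_def using term_nonneg by (auto intro: sum_nonneg)
  define S where "S x = (SUP n. ennreal (P n x))" for x
  have P: "P n \<in> X \<and> nX (P n) \<le> 2 * K" for n
    unfolding P_def by (rule weighted_partial_sums_in_space[OF K triangle fs])
  have S: "AE x in lebesgue. S x \<noteq> \<infinity>" "(\<lambda>x. enn2real (S x)) \<in> X"
    unfolding S_def using monotone_limit_in_space[of P, OF _ P_nonneg P_mono] P by blast+
  have "(1 / (2 * K)) ^ n * \<bar>fs n x\<bar> \<le> \<bar>enn2real (S x)\<bar>" if "S x \<noteq> \<infinity>" for n x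
  proof -
    have "(1 / (2 * K)) ^ n * \<bar>fs n x\<bar> \<le> P (Suc n) x"
      unfolding P_def using term_nonneg by (simp add: sum_nonneg)
    moreover have "ennreal (P (Suc n) x) \<le> S x"
      unfolding S_def by (rule SUP_upper) simp
    then have "P (Suc n) x \<le> enn2real (S x)"
      using that P_nonneg by (cases "S x") auto
    ultimately show ?thesis
      by simp
  qed
  then show ?thesis
    using S by (intro bexI[of _ "\<lambda>x. enn2real (S x)"] allI) (auto elim: eventually_mono)
qed

lemma dual_norm_less_top:
  assumes "g \<in> X'"
  shows "nX' g < \<infinity>"
proof -
  obtain K where K: "K \<ge> 1" "\<And>f g. f \<in> X \<Longrightarrow> g \<in> X \<Longrightarrow> nX (\<lambda>x. f x + g x) \<le> K * (nX f + nX g)"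
    using quasi_triangle by blast
  show ?thesis
    by (rule kothe_norm_less_top[OF space_subset_borel _ space_dominates_normalised[OF K] assms])
      (use K in simp)
qed

lemma nn_integral_le_bidual_norm:
  assumes "G \<in> X'" "h \<in> borel_measurable lebesgue"
  shows "(\<integral>\<^sup>+x. ennreal \<bar>G x * h x\<bar> \<partial>lebesgue) \<le> nX'' h * nX' G"
proof (rule nn_integral_le_kothe_norm[OF kothe_subset_borel _ _ assms(1) _ assms(2)])
  show "(\<lambda>x. c * g x) \<in> X' \<and> nX' (\<lambda>x. c * g x) = ennreal c * nX' g" if "g \<in> X'" "c > 0" for g c
  proof -
    have "g \<in> borel_measurable lebesgue"
      using that(1) kothe_subset_borel by blast
    then show ?thesis
      using that kothe_cmult kothe_norm_cmult[OF space_subset_borel, where nZ = nX] by simp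
  qed
  show "AE x in lebesgue. g x = 0" if "g \<in> X'" "nX' g = 0" for g
    using that AE_eq_0_if_dual_norm_eq_0 kothe_subset_borel by blast
  show "nX' G \<noteq> \<infinity>"
    using dual_norm_less_top[OF assms(1)] by simp
qed

end

section \<open>The maximal operator on the second Koethe dual\<close>

locale maximal_bounded = qbfs_fatou +
  fixes C :: real
  assumes C_nonneg: "C \<ge> 0"
    and maximal_bound: "\<forall>f\<in>X. maximal_in X f \<and> nX (\<lambda>x. enn2real (maximal f x)) \<le> C * nX f"
begin

lemma nn_integral_maximal_le_dual_norm:
  assumes f: "f \<in> X" and g: "g \<in> borel_measurable lebesgue"
  shows "(\<integral>\<^sup>+x. maximal f x * ennreal \<bar>g x\<bar> \<partial>lebesgue) \<le> nX' g * ennreal (C * nX f)"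
proof -
  have finite: "AE x in lebesgue. maximal f x \<noteq> \<infinity>" and in_space: "(\<lambda>x. enn2real (maximal f x)) \<in> X"
    and bound: "nX (\<lambda>x. enn2real (maximal f x)) \<le> C * nX f"
    using maximal_bound f unfolding maximal_in_def by auto
  have "(\<integral>\<^sup>+x. maximal f x * ennreal \<bar>g x\<bar> \<partial>lebesgue) =
      (\<integral>\<^sup>+x. ennreal \<bar>enn2real (maximal f x) * g x\<bar> \<partial>lebesgue)"
    using finite by (intro nn_integral_cong_AE) (auto simp: abs_mult ennreal_mult less_top elim: eventually_mono)
  also have "\<dots> \<le> nX' g * ennreal (nX (\<lambda>x. enn2real (maximal f x)))"
    by (rule nn_integral_le_dual_norm[OF in_space g])
  also have "\<dots> \<le> nX' g * ennreal (C * nX f)"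
    using bound by (intro mult_left_mono ennreal_leI) auto
  finally show ?thesis .
qed

lemma nn_integral_average_adjoint_le:
  assumes Qs: "\<And>i. Qs i \<in> cubes" and f: "f \<in> X" and g: "g \<in> borel_measurable lebesgue"
  shows "(\<integral>\<^sup>+y. ennreal \<bar>f y\<bar> * average_adjoint Qs (first_max_part Qs a N) N (\<lambda>x. ennreal \<bar>g x\<bar>) y \<partial>lebesgue)
    \<le> (ennreal C * nX' g) * ennreal (nX f)"
proof -
  have Qs_sets[measurable]: "Qs i \<in> sets lebesgue" for i
    using Qs cube_in_sets_lebesgue by blast
  have [measurable]: "first_max_part Qs a N i \<in> sets lebesgue" for i
    by (rule sets_first_max_part[OF Qs_sets]) simp
  have [measurable]: "f \<in> borel_measurable lebesgue"
    using f space_subset_borel by blast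
  have "(\<integral>\<^sup>+y. ennreal \<bar>f y\<bar> * average_adjoint Qs (first_max_part Qs a N) N (\<lambda>x. ennreal \<bar>g x\<bar>) y \<partial>lebesgue) =
      (\<integral>\<^sup>+x. (\<Sum>i<N. indicator (first_max_part Qs a N i) x * average f (Qs i)) * ennreal \<bar>g x\<bar> \<partial>lebesgue)"
    by (rule nn_integral_average_adjoint[symmetric]) (use g in measurable)
  also have "\<dots> \<le> (\<integral>\<^sup>+x. maximal f x * ennreal \<bar>g x\<bar> \<partial>lebesgue)"
    by (intro nn_integral_mono mult_right_mono sum_first_max_part_le average_le_maximal Qs) auto
  also have "\<dots> \<le> nX' g * ennreal (C * nX f)"
    by (rule nn_integral_maximal_le_dual_norm[OF f g])
  finally show ?thesis
    using C_nonneg norm_nonneg[OF f] by (simp add: ennreal_mult mult_ac)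
qed

lemma average_adjoint_in_dual:
  fixes a :: "nat \<Rightarrow> 'b::linorder" and N :: nat
  assumes Qs: "\<And>i. Qs i \<in> cubes" and g: "g \<in> X'"
  defines "G \<equiv> average_adjoint Qs (first_max_part Qs a N) N (\<lambda>x. ennreal \<bar>g x\<bar>)"
  shows "AE y in lebesgue. G y \<noteq> \<infinity>" "(\<lambda>y. enn2real (G y)) \<in> X'"
    "nX' (\<lambda>y. enn2real (G y)) \<le> ennreal C * nX' g"
proof -
  have g_borel: "g \<in> borel_measurable lebesgue"
    using g kothe_subset_borel by blast
  have [measurable]: "G \<in> borel_measurable lebesgue"
    unfolding G_def using Qs cube_in_sets_lebesgue by (intro borel_measurable_average_adjoint) blast
  have finite: "(\<integral>\<^sup>+y. ennreal \<bar>f y\<bar> * G y \<partial>lebesgue) < \<infinity>" if "f \<in> X" for f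
  proof -
    have "(\<integral>\<^sup>+y. ennreal \<bar>f y\<bar> * G y \<partial>lebesgue) \<le> (ennreal C * nX' g) * ennreal (nX f)"
      unfolding G_def by (rule nn_integral_average_adjoint_le[OF Qs that g_borel])
    also have "\<dots> < \<infinity>"
      using dual_norm_less_top[OF g] by (simp add: ennreal_mult_less_top)
    finally show ?thesis .
  qed
  show "AE y in lebesgue. G y \<noteq> \<infinity>"
    by (rule AE_finite_if_nn_integral_finite[OF _ finite]) measurable
  show "(\<lambda>y. enn2real (G y)) \<in> X'"
    by (rule enn2real_in_kothe[OF space_subset_borel _ finite]) measurable
  show "nX' (\<lambda>y. enn2real (G y)) \<le> ennreal C * nX' g"
  proof (rule kothe_norm_enn2real_le)
    fix f assume "f \<in> X" "nX f = 1"
    then show "(\<integral>\<^sup>+y. ennreal \<bar>f y\<bar> * G y \<partial>lebesgue) \<le> ennreal C * nX' g"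
      using nn_integral_average_adjoint_le[OF Qs _ g_borel, of f] unfolding G_def by simp
  qed
qed

lemma nn_integral_linearised_maximal_le:
  assumes Qs: "\<And>i. Qs i \<in> cubes" and h[measurable]: "h \<in> borel_measurable lebesgue" and g: "g \<in> X'"
  shows "(\<integral>\<^sup>+x. (\<Sum>i<N. indicator (first_max_part Qs a N i) x * average h (Qs i)) * ennreal \<bar>g x\<bar> \<partial>lebesgue)
    \<le> ennreal C * nX'' h * nX' g"
proof -
  define G where "G = average_adjoint Qs (first_max_part Qs a N) N (\<lambda>x. ennreal \<bar>g x\<bar>)"
  note G = average_adjoint_in_dual[where Qs = Qs and a = a and N = N, OF Qs g, folded G_def]
  have Qs_sets[measurable]: "Qs i \<in> sets lebesgue" for i
    using Qs cube_in_sets_lebesgue by blast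
  have [measurable]: "first_max_part Qs a N i \<in> sets lebesgue" for i
    by (rule sets_first_max_part[OF Qs_sets]) simp
  have [measurable]: "g \<in> borel_measurable lebesgue"
    using g kothe_subset_borel by blast
  have "(\<integral>\<^sup>+x. (\<Sum>i<N. indicator (first_max_part Qs a N i) x * average h (Qs i)) * ennreal \<bar>g x\<bar> \<partial>lebesgue) =
      (\<integral>\<^sup>+y. ennreal \<bar>h y\<bar> * G y \<partial>lebesgue)"
    unfolding G_def by (rule nn_integral_average_adjoint) measurable
  also have "\<dots> = (\<integral>\<^sup>+y. ennreal \<bar>enn2real (G y) * h y\<bar> \<partial>lebesgue)"
    using G(1) by (intro nn_integral_cong_AE) (auto simp: abs_mult ennreal_mult less_top mult.commute elim: eventually_mono)
  also have "\<dots> \<le> nX'' h * nX' (\<lambda>y. enn2real (G y))"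
    by (rule nn_integral_le_bidual_norm[OF G(2) h])
  also have "\<dots> \<le> nX'' h * (ennreal C * nX' g)"
    using G(3) by (rule mult_left_mono) simp
  finally show ?thesis
    by (simp add: mult_ac)
qed

lemma nn_integral_maximal_le_bidual_norm:
  assumes h[measurable]: "h \<in> borel_measurable lebesgue" and g: "g \<in> X'"
  shows "(\<integral>\<^sup>+x. maximal h x * ennreal \<bar>g x\<bar> \<partial>lebesgue) \<le> ennreal C * nX'' h * nX' g"
proof -
  obtain Qs :: "nat \<Rightarrow> 'a set" where Qs: "\<And>i. Qs i \<in> cubes"
    "\<And>x. maximal h x = (SUP i. if x \<in> Qs i then average h (Qs i) else 0)"
    using maximal_eq_SUP_countable by metis
  have [measurable]: "Qs i \<in> sets lebesgue" for i
    using Qs(1) cube_in_sets_lebesgue by blast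
  have [measurable]: "g \<in> borel_measurable lebesgue"
    using g kothe_subset_borel by blast
  define a where "a i = average h (Qs i)" for i
  define L where "L N x = (\<Sum>i<N. indicator (first_max_part Qs a N i) x * a i)" for N x
  have L_eq: "L N x = (SUP i\<in>{..<N}. if x \<in> Qs i then a i else 0)" for N x
    unfolding L_def by (rule sum_first_max_part_eq_SUP)
  have [measurable]: "first_max_part Qs a N i \<in> sets lebesgue" for N i
    by (rule sets_first_max_part) auto
  have [measurable]: "L N \<in> borel_measurable lebesgue" for N
    unfolding L_def by measurable
  have "maximal h x = (SUP N. L N x)" for x
    unfolding L_eq Qs(2) a_def SUP_lessThan_SUP ..
  then have "(\<integral>\<^sup>+x. maximal h x * ennreal \<bar>g x\<bar> \<partial>lebesgue) = (\<integral>\<^sup>+x. (SUP N. L N x * ennreal \<bar>g x\<bar>) \<partial>lebesgue)"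
    by (simp add: SUP_mult_right_ennreal)
  also have "\<dots> = (SUP N. \<integral>\<^sup>+x. L N x * ennreal \<bar>g x\<bar> \<partial>lebesgue)"
  proof (rule nn_integral_monotone_convergence_SUP)
    show "incseq (\<lambda>N x. L N x * ennreal \<bar>g x\<bar>)"
      unfolding L_eq by (intro monoI le_funI mult_right_mono SUP_subset_mono) auto
  qed measurable
  also have "\<dots> \<le> ennreal C * nX'' h * nX' g"
    unfolding L_def a_def by (intro SUP_least nn_integral_linearised_maximal_le Qs(1) h g)
  finally show ?thesis .
qed

lemma indicator_cube_in_dual:
  assumes Q: "Q \<in> cubes"
  shows "indicator Q \<in> X'"
  unfolding kothe_def
proof (intro CollectI conjI ballI)
  have [measurable]: "Q \<in> sets lebesgue"
    using cube_in_sets_lebesgue[OF Q] .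
  show "(indicator Q :: 'a \<Rightarrow> real) \<in> borel_measurable lebesgue"
    by measurable
  fix f assume f: "f \<in> X"
  have [measurable]: "f \<in> borel_measurable lebesgue"
    using f space_subset_borel by blast
  have maximal_finite: "AE x in lebesgue. maximal f x \<noteq> \<infinity>"
    using maximal_bound f unfolding maximal_in_def by auto
  have "\<exists>x\<in>Q. maximal f x \<noteq> \<infinity>"
  proof (rule ccontr)
    assume "\<not> (\<exists>x\<in>Q. maximal f x \<noteq> \<infinity>)"
    then have "AE x in lebesgue. x \<notin> Q"
      using maximal_finite by (auto elim: eventually_mono)
    then have "emeasure lebesgue Q = 0"
      using AE_iff_measurable[of Q lebesgue "\<lambda>x. x \<notin> Q"] by simp
    then show False
      using emeasure_cube(1)[OF Q] by simp
  qed
  then obtain x where "x \<in> Q" "maximal f x \<noteq> \<infinity>"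
    by blast
  then have "average f Q \<noteq> \<infinity>"
    using average_le_maximal[OF Q, of x f] by (auto simp: top_unique)
  then have "(\<integral>\<^sup>+y\<in>Q. ennreal \<bar>f y\<bar> \<partial>lebesgue) < \<infinity>"
    using emeasure_cube(2)[OF Q] by (simp add: average_def ennreal_divide_eq_top_iff top.not_eq_extremum)
  moreover have "(\<integral>\<^sup>+y. ennreal (norm (f y * indicator Q y)) \<partial>lebesgue) = (\<integral>\<^sup>+y\<in>Q. ennreal \<bar>f y\<bar> \<partial>lebesgue)"
    by (intro nn_integral_cong) (auto split: split_indicator)
  ultimately have "(\<integral>\<^sup>+y. ennreal (norm (f y * indicator Q y)) \<partial>lebesgue) < \<infinity>"
    by simp
  then show "integrable lebesgue (\<lambda>y. f y * indicator Q y)"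
    by (intro integrableI_bounded) measurable
qed

lemma nn_integral_maximal_bidual_less_top:
  assumes "h \<in> X''" "g \<in> X'"
  shows "(\<integral>\<^sup>+x. maximal h x * ennreal \<bar>g x\<bar> \<partial>lebesgue) < \<infinity>"
proof -
  have "h \<in> borel_measurable lebesgue"
    using assms(1) kothe_subset_borel by blast
  then show ?thesis
    using le_less_trans[OF nn_integral_maximal_le_bidual_norm[OF _ assms(2)]] bidual_norm_less_top[OF assms(1)]
      dual_norm_less_top[OF assms(2)]
    by (simp add: ennreal_mult_less_top)
qed

lemma AE_maximal_bidual_finite:
  assumes h: "h \<in> X''"
  shows "AE x in lebesgue. maximal h x \<noteq> \<infinity>"
proof -
  define Q where "Q n = box (- (real n + 1) *\<^sub>R One) ((real n + 1) *\<^sub>R (One :: 'a))" for n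
  have Q: "Q n \<in> cubes" for n
    unfolding Q_def by (rule centred_box_in_cubes) simp
  have [measurable]: "Q n \<in> sets lebesgue" for n
    using Q cube_in_sets_lebesgue by blast
  have [measurable]: "maximal h \<in> borel_measurable lebesgue"
    by (rule borel_measurable_maximal)
  have "(\<integral>\<^sup>+x. maximal h x * ennreal \<bar>indicator (Q n) x\<bar> \<partial>lebesgue) \<noteq> \<infinity>" for n
    using nn_integral_maximal_bidual_less_top[OF h indicator_cube_in_dual[OF Q]] by (rule less_imp_neq)
  then have "AE x in lebesgue. maximal h x * ennreal \<bar>indicator (Q n) x\<bar> \<noteq> \<infinity>" for n
    by (rule nn_integral_PInf_AE[rotated]) measurable
  then have "AE x in lebesgue. x \<in> Q n \<longrightarrow> maximal h x \<noteq> \<infinity>" for n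
    by (rule eventually_mono) (auto split: split_indicator_asm)
  then have "AE x in lebesgue. \<forall>n. x \<in> Q n \<longrightarrow> maximal h x \<noteq> \<infinity>"
    unfolding AE_all_countable by blast
  moreover have "\<exists>n. x \<in> Q n" for x
  proof -
    obtain n :: nat where "norm x < real n"
      using reals_Archimedean2 by blast
    then have "x \<in> Q n"
      unfolding Q_def by (intro mem_centred_box) simp
    then show ?thesis
      by blast
  qed
  ultimately show ?thesis
    by (auto elim: eventually_mono)
qed

lemma maximal_bidual_bounded:
  assumes h: "h \<in> X''"
  shows "maximal_in X'' h \<and> nX'' (\<lambda>x. enn2real (maximal h x)) \<le> ennreal C * nX'' h"
proof -
  have [measurable]: "h \<in> borel_measurable lebesgue"
    using h kothe_subset_borel by blast
  have commute: "(\<integral>\<^sup>+x. ennreal \<bar>g x\<bar> * maximal h x \<partial>lebesgue) = (\<integral>\<^sup>+x. maximal h x * ennreal \<bar>g x\<bar> \<partial>lebesgue)"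
    for g
    by (simp add: mult.commute)
  have "(\<lambda>x. enn2real (maximal h x)) \<in> X''"
    using nn_integral_maximal_bidual_less_top[OF h] unfolding commute[symmetric]
    by (rule enn2real_in_kothe[OF kothe_subset_borel borel_measurable_maximal])
  moreover have "nX'' (\<lambda>x. enn2real (maximal h x)) \<le> ennreal C * nX'' h"
  proof (rule kothe_norm_enn2real_le)
    fix g assume "g \<in> X'" "nX' g = 1"
    then show "(\<integral>\<^sup>+x. ennreal \<bar>g x\<bar> * maximal h x \<partial>lebesgue) \<le> ennreal C * nX'' h"
      using nn_integral_maximal_le_bidual_norm[of h g] unfolding commute by simp
  qed
  ultimately show ?thesis
    using AE_maximal_bidual_finite[OF h] unfolding maximal_in_def by blast
qed

end

theorem theorem4p1:
  fixes X :: "('a::euclidean_space \<Rightarrow> real) set" and nX :: "('a \<Rightarrow> real) \<Rightarrow> real" and C :: real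
  assumes "qbfs X nX" and "fatou_property X nX"
    and "C \<ge> 0"
    and "\<forall>f\<in>X. maximal_in X f \<and> nX (\<lambda>x. enn2real (maximal f x)) \<le> C * nX f"
  shows "\<forall>h\<in>kothe (kothe X). maximal_in (kothe (kothe X)) h \<and>
           kothe_norm (kothe X) (kothe_norm X nX) (\<lambda>x. enn2real (maximal h x))
             \<le> ennreal C * kothe_norm (kothe X) (kothe_norm X nX) h"
proof -
  interpret maximal_bounded X nX C
    using assms by unfold_locales
  show ?thesis
    using maximal_bidual_bounded by blast
qed

end
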